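(* Let $d\in\Lambda$ be a root ($d^2=-2$) and $F\subset d^\perp$ a primitive totally isotropic sublattice of rank $2$, where $d^\perp$ is the orthogonal complement of $d$ in $\Lambda$. Then every element of $\mathrm{SL}(F)$ lifts to an element of $O^+(d^\perp)$.
   Context: $\Lambda=\mathbb U(2)\oplus\mathbb U\oplus\mathbb E_8(2)$ ($\mathbb U$ hyperbolic plane, $\mathbb E_8$ negative-definite, $(2)$ scaling); $d^\perp$ has signature $(2,9)$. For a lattice $L$ of signature $(2,n)$, $O^+(L)$ is the subgroup of $O(L)$ preserving each of the two components of $\{[\omega]\in\mathbf P(L\otimes\mathbb C):\omega^2=0,\langle\omega,\bar\omega\rangle>0\}$. "Lifts" means: there is $g\in O^+(d^\perp)$ with $g(F)=F$ and $g|_F$ equal to the given element. *)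

theory Defs
  imports "HOL-Analysis.Analysis" "HOL-Library.Numeral_Type"
begin

text \<open>The lattice Lambda = U(2) + U + E8(2) is modelled as int^12 with the Gram
matrix below. Coordinates 0,1: U(2); 2,3: U; 4..11: E8(2) (negative definite E8
scaled by 2).\<close>

definition idx :: "12 \<Rightarrow> nat" where
  "idx i = nat (Rep_bit0 i)"

text \<open>Negative definite E8 Gram matrix (nodes 0..7, Bourbaki labelling shifted by one:
edges 1-3, 3-4, 4-5, 5-6, 6-7, 7-8, 2-4).\<close>
definition e8_edge :: "nat \<Rightarrow> nat \<Rightarrow> bool" where
  "e8_edge i j \<longleftrightarrow> {i, j} \<in> {{0,2},{2,3},{3,4},{4,5},{5,6},{6,7},{1,3}}"

definition e8 :: "nat \<Rightarrow> nat \<Rightarrow> int" where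
  "e8 i j = (if i = j then -2 else if e8_edge i j then 1 else 0)"

definition gram :: "nat \<Rightarrow> nat \<Rightarrow> int" where
  "gram i j =
     (if i < 2 \<and> j < 2 then (if i \<noteq> j then 2 else 0)
      else if 2 \<le> i \<and> i < 4 \<and> 2 \<le> j \<and> j < 4 then (if i \<noteq> j then 1 else 0)
      else if 4 \<le> i \<and> i < 12 \<and> 4 \<le> j \<and> j < 12 then 2 * e8 (i - 4) (j - 4)
      else 0)"

definition bf :: "int^12 \<Rightarrow> int^12 \<Rightarrow> int" where
  "bf x y = (\<Sum>i\<in>UNIV. \<Sum>j\<in>UNIV. x$i * gram (idx i) (idx j) * y$j)"

definition bfC :: "complex^12 \<Rightarrow> complex^12 \<Rightarrow> complex" where
  "bfC z w = (\<Sum>i\<in>UNIV. \<Sum>j\<in>UNIV. z$i * of_int (gram (idx i) (idx j)) * w$j)"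

definition cvec :: "int^12 \<Rightarrow> complex^12" where
  "cvec x = (\<chi> i. of_int (x$i))"

definition cconj :: "complex^12 \<Rightarrow> complex^12" where
  "cconj z = (\<chi> i. cnj (z$i))"

definition dperp :: "int^12 \<Rightarrow> (int^12) set" where
  "dperp d = {x. bf x d = 0}"

text \<open>L tensor C for a sublattice L, as the complex span inside C^12.\<close>
definition complexification :: "(int^12) set \<Rightarrow> (complex^12) set" where
  "complexification L = vec.span (cvec ` L)"

text \<open>The cone over the set {[w] in P(L x C) : w^2 = 0, <w, conj w> > 0}.\<close>
definition period_cone :: "(int^12) set \<Rightarrow> (complex^12) set" where
  "period_cone L = {w \<in> complexification L. w \<noteq> 0 \<and> bfC w w = 0 \<and> Re (bfC w (cconj w)) > 0}"

definition orth :: "(int^12) set \<Rightarrow> (int^12 \<Rightarrow> int^12) set" where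
  "orth L = {g. bij_betw g L L \<and> (\<forall>x\<in>L. \<forall>y\<in>L. g (x + y) = g x + g y)
                \<and> (\<forall>x\<in>L. \<forall>y\<in>L. bf (g x) (g y) = bf x y)}"

definition orth_plus :: "(int^12) set \<Rightarrow> (int^12 \<Rightarrow> int^12) set" where
  "orth_plus L = {g \<in> orth L. \<exists>gC :: complex^12 \<Rightarrow> complex^12.
      (\<forall>x\<in>L. gC (cvec x) = cvec (g x))
    \<and> (\<forall>z\<in>complexification L. \<forall>w\<in>complexification L. gC (z + w) = gC z + gC w)
    \<and> (\<forall>z\<in>complexification L. \<forall>c. gC (c *s z) = c *s gC z)
    \<and> (\<forall>w\<in>period_cone L. gC w \<in> connected_component_set (period_cone L) w)}"

definition lattice_basis :: "(int^12) set \<Rightarrow> int^12 \<Rightarrow> int^12 \<Rightarrow> bool" where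
  "lattice_basis F f1 f2 \<longleftrightarrow>
     F = {a *s f1 + c *s f2 | a c. True} \<and>
     (\<forall>a c. a *s f1 + c *s f2 = 0 \<longrightarrow> a = 0 \<and> c = 0)"

definition rank2_sublattice :: "(int^12) set \<Rightarrow> bool" where
  "rank2_sublattice F \<longleftrightarrow> (\<exists>f1 f2. lattice_basis F f1 f2)"

definition primitive_in :: "(int^12) set \<Rightarrow> (int^12) set \<Rightarrow> bool" where
  "primitive_in L F \<longleftrightarrow> F \<subseteq> L \<and> (\<forall>x\<in>L. \<forall>n::int. n \<noteq> 0 \<longrightarrow> n *s x \<in> F \<longrightarrow> x \<in> F)"

definition totally_isotropic :: "(int^12) set \<Rightarrow> bool" where
  "totally_isotropic F \<longleftrightarrow> (\<forall>x\<in>F. \<forall>y\<in>F. bf x y = 0)"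

text \<open>SL(F) for a rank 2 lattice F: Z-linear automorphisms of F with determinant 1
(determinant computed in a Z-basis; it is basis independent).\<close>
definition SL_lat :: "(int^12) set \<Rightarrow> (int^12 \<Rightarrow> int^12) set" where
  "SL_lat F = {\<phi>. bij_betw \<phi> F F \<and> (\<forall>x\<in>F. \<forall>y\<in>F. \<phi> (x + y) = \<phi> x + \<phi> y) \<and>
     (\<exists>f1 f2 a b c e. lattice_basis F f1 f2 \<and>
        \<phi> f1 = a *s f1 + c *s f2 \<and> \<phi> f2 = b *s f1 + e *s f2 \<and> a * e - b * c = 1)}"

end

theory Submission
  imports Defs
begin

(* Since d is a root, the pairing on d^perp is even, and twice the inverse Gram matrix of Lambda
   is integral (E8 is unimodular). Together with primitivity of F this yields y1, y2 in d^perp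
   with <f_i, y_j> = 2 delta_ij; fixing the parity of one coordinate and subtracting multiples of
   the f_i makes them isotropic and orthogonal, so f1, f2, y1, y2 span a copy of U(2) + U(2).
   A matrix A in SL(2) then acts on d^perp by A on F, by the inverse transpose of A on
   span {y1, y2}, and trivially on the orthogonal complement of the frame; only halved (hence
   integral) pairings occur, so this is an isometry of d^perp extending the given element.
   It preserves each component of the period domain because, as A runs through the connected
   group SL(2, R), the corresponding complex maps form a continuous family through the identity. *)

lemma idx_less: "idx i < 12"
  using bit0.Rep_less_n[of i] by (simp add: idx_def)

lemma of_nat_idx: "of_nat (idx i) = (i :: 12)"
  using Rep_bit0[of i] bit0.Rep_mod[of i]
  by (simp add: idx_def bit0.of_nat_eq bit0.Rep_inverse)

lemma idx_of_nat: "n < 12 \<Longrightarrow> idx (of_nat n :: 12) = n"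
  by (simp add: idx_def bit0.of_nat_eq bit0.Abs_inverse)

lemma idx_inject: "idx i = idx j \<longleftrightarrow> i = j"
  by (metis of_nat_idx)

lemma sum_UNIV_12: "(\<Sum>i\<in>UNIV. f i) = (\<Sum>n<12. f (of_nat n :: 12))"
  by (rule sum.reindex_bij_witness[where i = of_nat and j = idx])
     (auto simp: of_nat_idx idx_of_nat idx_less)

lemma bf_explicit: "bf x y =
  2 * (x$0 * y$1 + x$1 * y$0) + x$2 * y$3 + x$3 * y$2
  - 4 * (x$4 * y$4 + x$5 * y$5 + x$6 * y$6 + x$7 * y$7 + x$8 * y$8 + x$9 * y$9 + x$10 * y$10 + x$11 * y$11)
  + 2 * (x$4 * y$6 + x$6 * y$4 + x$6 * y$7 + x$7 * y$6 + x$7 * y$8 + x$8 * y$7 + x$8 * y$9 + x$9 * y$8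
       + x$9 * y$10 + x$10 * y$9 + x$10 * y$11 + x$11 * y$10 + x$5 * y$7 + x$7 * y$5)"
proof -
  have "bf x y = (\<Sum>n<12. \<Sum>m<12. x $ of_nat n * gram n m * y $ of_nat m)"
    unfolding bf_def sum_UNIV_12 by (simp add: idx_of_nat)
  then show ?thesis
    by (simp add: numeral_eq_Suc lessThan_Suc gram_def e8_def e8_edge_def doubleton_eq_iff algebra_simps)
qed

lemma gram_sym: "gram i j = gram j i"
  unfolding gram_def e8_def e8_edge_def by (auto simp: insert_commute)

lemma bf_sym: "bf x y = bf y x"
  unfolding bf_def by (subst sum.swap) (simp add: gram_sym algebra_simps)

lemma bf_add_left: "bf (x + y) z = bf x z + bf y z"
  unfolding bf_def by (simp add: algebra_simps sum.distrib)

lemma bf_add_right: "bf z (x + y) = bf z x + bf z y"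
  unfolding bf_def by (simp add: algebra_simps sum.distrib)

lemma bf_diff_left: "bf (x - y) z = bf x z - bf y z"
  unfolding bf_def by (simp add: algebra_simps sum_subtractf)

lemma bf_diff_right: "bf z (x - y) = bf z x - bf z y"
  unfolding bf_def by (simp add: algebra_simps sum_subtractf)

lemma bf_scale_left: "bf (k *s x) y = k * bf x y"
  unfolding bf_def by (simp add: sum_distrib_left algebra_simps)

lemma bf_scale_right: "bf x (k *s y) = k * bf x y"
  unfolding bf_def by (simp add: sum_distrib_left algebra_simps)

lemma bf_zero_left: "bf 0 y = 0"
  unfolding bf_def by simp

lemmas bf_linear = bf_add_left bf_add_right bf_diff_left bf_diff_right bf_scale_left bf_scale_right

lemma bf_sum_left: "bf (\<Sum>i\<in>I. x i) y = (\<Sum>i\<in>I. bf (x i) y)"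
  by (induction I rule: infinite_finite_induct) (simp_all add: bf_add_left bf_zero_left)

section \<open>Parity on the orthogonal complement of a root\<close>

lemma bf_parity: "even (bf x y - (x$2 * y$3 + x$3 * y$2))"
  unfolding bf_explicit by presburger

lemma bf_self_mod4: "4 dvd bf x x - 2 * (x$2 * x$3)"
  unfolding bf_explicit by (simp add: ac_simps)

lemma root_coords_odd:
  assumes "bf d d = -2"
  shows "odd (d$2)" "odd (d$3)"
proof -
  define p where "p = d$2 * d$3"
  have "4 dvd - 2 - 2 * p"
    using bf_self_mod4[of d] assms by (simp add: p_def)
  then have "odd (d$2 * d$3)"
    unfolding p_def[symmetric] by presburger
  then show "odd (d$2)" "odd (d$3)"
    by auto
qed

lemma dperp_coords_parity:
  assumes "bf d d = -2" and "x \<in> dperp d"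
  shows "even (x$2) \<longleftrightarrow> even (x$3)"
  using bf_parity[of x d] assms(2) root_coords_odd[OF assms(1)] by (auto simp: dperp_def)

lemma dperp_even:
  assumes "bf d d = -2" and "x \<in> dperp d" and "y \<in> dperp d"
  shows "even (bf x y)"
  using bf_parity[of x y] dperp_coords_parity[OF assms(1,2)] dperp_coords_parity[OF assms(1,3)]
  by auto

lemma dperp_norm_mod4:
  assumes "bf d d = -2" and "x \<in> dperp d"
  shows "4 dvd bf x x - 2 * x$2"
proof -
  have "even (x$2 * (x$3 - 1))"
    using dperp_coords_parity[OF assms] by auto
  then obtain m where m: "x$2 * (x$3 - 1) = 2 * m"
    by (elim evenE)
  have "bf x x - 2 * x$2 = (bf x x - 2 * (x$2 * x$3)) + 4 * m"
    using m by (simp add: algebra_simps)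
  then show ?thesis
    by (simp only:) (intro dvd_add bf_self_mod4 dvd_triv_left)
qed

lemma dperp_isotropic_coord_even:
  assumes "bf d d = -2" and "x \<in> dperp d" and "bf x x = 0"
  shows "even (x$2)"
  using dperp_norm_mod4[OF assms(1,2)] assms(3) by presburger

lemma dperp_norm_dvd_4:
  assumes "bf d d = -2" and "x \<in> dperp d" and "even (x$2)"
  shows "4 dvd bf x x"
  using dperp_norm_mod4[OF assms(1,2)] assms(3) by presburger

section \<open>Duality\<close>

text \<open>\<open>gram_dual\<close> is twice the inverse of \<open>gram\<close>; its E8 block is minus the inverse Cartan
  matrix of E8.\<close>

definition e8_dual :: "nat \<Rightarrow> nat \<Rightarrow> int" where
  "e8_dual i j = - [[4, 5, 7, 10, 8, 6, 4, 2], [5, 8, 10, 15, 12, 9, 6, 3], [7, 10, 14, 20, 16, 12, 8, 4],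
     [10, 15, 20, 30, 24, 18, 12, 6], [8, 12, 16, 24, 20, 15, 10, 5], [6, 9, 12, 18, 15, 12, 8, 4],
     [4, 6, 8, 12, 10, 8, 6, 3], [2, 3, 4, 6, 5, 4, 3, 2]] ! i ! j"

definition gram_dual :: "nat \<Rightarrow> nat \<Rightarrow> int" where
  "gram_dual i j =
     (if i < 2 \<and> j < 2 then (if i \<noteq> j then 1 else 0)
      else if 2 \<le> i \<and> i < 4 \<and> 2 \<le> j \<and> j < 4 then (if i \<noteq> j then 2 else 0)
      else if 4 \<le> i \<and> i < 12 \<and> 4 \<le> j \<and> j < 12 then e8_dual (i - 4) (j - 4)
      else 0)"

lemma gram_gram_dual:
  "\<forall>i<12. \<forall>k<12. (\<Sum>j<12. gram i j * gram_dual j k) = (if i = k then 2 else 0)"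
  by (simp add: numeral_eq_Suc All_less_Suc lessThan_Suc gram_def gram_dual_def
      e8_def e8_edge_def e8_dual_def doubleton_eq_iff)

definition dual_basis :: "12 \<Rightarrow> int^12" where
  "dual_basis i = (\<chi> j. gram_dual (idx j) (idx i))"

lemma bf_dual_basis: "bf w (dual_basis i) = 2 * w $ i"
proof -
  have column: "w $ k * (\<Sum>j\<in>UNIV. gram (idx k) (idx j) * gram_dual (idx j) (idx i))
      = (if k = i then 2 * w $ i else 0)" for k
    using gram_gram_dual idx_less[of k] idx_less[of i]
    by (simp add: sum_UNIV_12 idx_of_nat idx_inject)
  have "bf w (dual_basis i) = (\<Sum>k\<in>UNIV. w $ k * (\<Sum>j\<in>UNIV. gram (idx k) (idx j) * gram_dual (idx j) (idx i)))"
    unfolding bf_def dual_basis_def by (simp add: sum_distrib_left mult.assoc)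
  also have "\<dots> = 2 * w $ i"
    by (simp add: column)
  finally show ?thesis .
qed

definition dperp_dual :: "int^12 \<Rightarrow> 12 \<Rightarrow> int^12" where
  "dperp_dual d i = dual_basis i + d $ i *s d"

lemma dperp_dual_mem: "bf d d = -2 \<Longrightarrow> dperp_dual d i \<in> dperp d"
  by (simp add: dperp_def dperp_dual_def bf_linear bf_sym[of "dual_basis i"] bf_dual_basis)

lemma bf_dperp_dual: "w \<in> dperp d \<Longrightarrow> bf w (dperp_dual d i) = 2 * w $ i"
  by (simp add: dperp_def dperp_dual_def bf_linear bf_dual_basis)

lemma dperp_dual_coord_odd:
  assumes "bf d d = -2"
  shows "odd (dperp_dual d 2 $ 2)"
proof -
  have "dual_basis 2 $ 2 = 0"
    using idx_of_nat[of 2] by (simp add: dual_basis_def gram_dual_def)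
  then show ?thesis
    using root_coords_odd(1)[OF assms] by (simp add: dperp_dual_def)
qed

lemma Gcd_image_lincomb:
  fixes f :: "'a \<Rightarrow> int"
  assumes "finite I"
  shows "\<exists>c. (\<Sum>i\<in>I. c i * f i) = Gcd (f ` I)"
  using assms
proof (induction I rule: finite_induct)
  case empty
  show ?case
    by simp
next
  case (insert i I)
  then obtain c where c: "(\<Sum>j\<in>I. c j * f j) = Gcd (f ` I)"
    by blast
  obtain u v where uv: "u * f i + v * Gcd (f ` I) = gcd (f i) (Gcd (f ` I))"
    using bezout_int by blast
  have "(\<Sum>j\<in>insert i I. (if j = i then u else v * c j) * f j) = u * f i + v * (\<Sum>j\<in>I. c j * f j)"
    using insert.hyps by (auto simp: sum_distrib_left mult.assoc intro!: sum.cong)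
  then show ?case
    using c uv by (metis Gcd_insert image_insert)
qed

lemma dperp_primitive_pairing:
  assumes d: "bf d d = -2" and v: "v \<in> dperp d"
    and primitive: "\<And>n x. x \<in> dperp d \<Longrightarrow> v = n *s x \<Longrightarrow> n dvd 1"
  shows "\<exists>u\<in>dperp d. bf u v = 2"
proof -
  define g where "g = Gcd (range (($) v))"
  obtain c where c: "(\<Sum>i\<in>UNIV. c i * v $ i) = g"
    using Gcd_image_lincomb[of UNIV "($) v"] unfolding g_def by auto
  define u where "u = (\<Sum>i\<in>UNIV. c i *s dperp_dual d i)"
  have u: "u \<in> dperp d"
    using dperp_dual_mem[OF d] by (simp add: u_def dperp_def bf_sum_left bf_scale_left)
  have "bf u v = (\<Sum>i\<in>UNIV. c i * (2 * v $ i))"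
    using bf_dperp_dual[OF v] by (simp add: u_def bf_sum_left bf_scale_left bf_sym[of "dperp_dual d _"])
  then have uv: "bf u v = 2 * g"
    by (simp add: c[symmetric] sum_distrib_left algebra_simps)
  define v' where "v' = (\<chi> i. v $ i div g)"
  have v_eq: "v = g *s v'"
    by (simp add: v'_def g_def vec_eq_iff Gcd_dvd)
  have "g * bf v' d = 0"
    using v by (simp add: v_eq dperp_def bf_scale_left)
  then have "v' \<in> dperp d"
    by (auto simp: dperp_def v'_def bf_def)
  then have "g dvd 1"
    using primitive v_eq by blast
  then have "g = 1"
    by (simp add: g_def)
  then show ?thesis
    using u uv by auto
qed

lemma lattice_basis_mem: "lattice_basis F f1 f2 \<Longrightarrow> s *s f1 + t *s f2 \<in> F"
  unfolding lattice_basis_def by blast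

lemma lattice_basis_vectors_mem:
  assumes "lattice_basis F f1 f2"
  shows "f1 \<in> F" "f2 \<in> F"
  using lattice_basis_mem[OF assms, of 1 0] lattice_basis_mem[OF assms, of 0 1] by simp_all

lemma lattice_basis_coeffs_unique:
  assumes "lattice_basis F f1 f2" and "s *s f1 + t *s f2 = s' *s f1 + t' *s f2"
  shows "s = s'" "t = t'"
proof -
  have "(s - s') *s f1 + (t - t') *s f2 = 0"
    using assms(2) by (simp add: vec_eq_iff algebra_simps)
  then have "s - s' = 0 \<and> t - t' = 0"
    using assms(1) unfolding lattice_basis_def by blast
  then show "s = s'" "t = t'"
    by simp_all
qed

definition sublattice :: "(int^12) set \<Rightarrow> bool" where
  "sublattice L \<longleftrightarrow> (\<forall>x\<in>L. \<forall>y\<in>L. x + y \<in> L) \<and> (\<forall>k. \<forall>x\<in>L. k *s x \<in> L)"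

lemma sublattice_dperp: "sublattice (dperp d)"
  by (simp add: sublattice_def dperp_def bf_linear)

lemma sublattice_lattice_basis:
  assumes "lattice_basis F f1 f2"
  shows "sublattice F"
proof -
  have sum: "(a *s f1 + c *s f2) + (a' *s f1 + c' *s f2) = (a + a') *s f1 + (c + c') *s f2"
    and scale: "k *s (a *s f1 + c *s f2) = (k * a) *s f1 + (k * c) *s f2" for a c a' c' k
    by (simp_all add: vec_eq_iff algebra_simps)
  show ?thesis
    using assms unfolding sublattice_def lattice_basis_def by (auto simp only: sum scale) blast+
qed

lemma additive_int_scale:
  assumes L: "sublattice L" and add: "\<forall>x\<in>L. \<forall>y\<in>L. \<phi> (x + y) = \<phi> x + \<phi> y" and x: "x \<in> L"
  shows "\<phi> (k *s x) = k *s \<phi> x"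
proof -
  have mem: "j *s x \<in> L" for j
    using L x unfolding sublattice_def by blast
  have step: "\<phi> ((j + 1) *s x) = \<phi> (j *s x) + \<phi> x" for j
    using add mem[of j] x by (simp add: vector_sadd_rdistrib)
  have "\<phi> (0 *s x) = \<phi> (0 *s x) + \<phi> (0 *s x)"
    using add mem[of 0] by (metis add_0 vector_smult_lzero)
  then have zero: "\<phi> (0 *s x) = 0 *s \<phi> x"
    by simp
  show ?thesis
  proof (induction k rule: int_induct[where k = 0])
    case base
    show ?case by (rule zero)
  next
    case (step1 i)
    then show ?case
      using step[of i] by (simp add: vector_sadd_rdistrib)
  next
    case (step2 i)
    then show ?case
      using step[of "i - 1"] by (simp add: vector_sub_rdistrib eq_diff_eq)
  qed
qed

lemma additive_lattice_basis_linear: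
  assumes basis: "lattice_basis F f1 f2" and add: "\<forall>x\<in>F. \<forall>y\<in>F. \<phi> (x + y) = \<phi> x + \<phi> y"
  shows "\<phi> (s *s f1 + t *s f2) = s *s \<phi> f1 + t *s \<phi> f2"
proof -
  have F: "sublattice F"
    by (rule sublattice_lattice_basis[OF basis])
  note f = lattice_basis_vectors_mem[OF basis]
  have "s *s f1 \<in> F" "t *s f2 \<in> F"
    using F f unfolding sublattice_def by blast+
  then show ?thesis
    using add additive_int_scale[OF F add f(1)] additive_int_scale[OF F add f(2)] by simp
qed

lemma primitive_coeffs_dvd:
  assumes "primitive_in L F" and basis: "lattice_basis F f1 f2"
    and "x \<in> L" and nx: "n *s x = s *s f1 + t *s f2"
  shows "n dvd s \<and> n dvd t"
proof (cases "n = 0")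
  case True
  then have "s *s f1 + t *s f2 = 0 *s f1 + 0 *s f2"
    using nx by simp
  then have "s = 0" "t = 0"
    by (rule lattice_basis_coeffs_unique[OF basis])+
  then show ?thesis
    by simp
next
  case False
  then have "x \<in> F"
    using assms(1,3) nx lattice_basis_mem[OF basis] unfolding primitive_in_def by metis
  then obtain a c where "x = a *s f1 + c *s f2"
    using basis unfolding lattice_basis_def by blast
  then have "(n * a) *s f1 + (n * c) *s f2 = s *s f1 + t *s f2"
    using nx by (simp add: vec_eq_iff algebra_simps)
  then show ?thesis
    using lattice_basis_coeffs_unique[OF basis] by (metis dvd_triv_left)
qed

section \<open>Hyperbolic frames\<close>

definition dual_pair :: "int^12 \<Rightarrow> int^12 \<Rightarrow> int^12 \<Rightarrow> int^12 \<Rightarrow> bool" where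
  "dual_pair f1 f2 u1 u2 \<longleftrightarrow> bf u1 f1 = 2 \<and> bf u1 f2 = 0 \<and> bf u2 f1 = 0 \<and> bf u2 f2 = 2"

lemma dual_pair_exists:
  assumes d: "bf d d = -2" and basis: "lattice_basis F f1 f2"
    and F: "F \<subseteq> dperp d" and prim: "primitive_in (dperp d) F"
  shows "\<exists>u1\<in>dperp d. \<exists>u2\<in>dperp d. dual_pair f1 f2 u1 u2"
proof -
  have f: "f1 \<in> dperp d" "f2 \<in> dperp d"
    using lattice_basis_vectors_mem[OF basis] F by auto
  have pairing: "\<exists>u\<in>dperp d. bf u (s *s f1 + t *s f2) = 2" if unit: "s = 1 \<or> t = 1" for s t
  proof (rule dperp_primitive_pairing[OF d])
    show "s *s f1 + t *s f2 \<in> dperp d"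
      using lattice_basis_mem[OF basis] F by blast
    show "n dvd 1" if "x \<in> dperp d" and "s *s f1 + t *s f2 = n *s x" for n x
      using primitive_coeffs_dvd[OF prim basis that(1) that(2)[symmetric]] unit by auto
  qed
  obtain u where u: "u \<in> dperp d" "bf u f1 = 2"
    using pairing[of 1 0] by auto
  obtain k where k: "bf u f2 = 2 * k"
    using dperp_even[OF d u(1) f(2)] by (elim evenE)
  obtain w where w: "w \<in> dperp d" "bf w ((- k) *s f1 + 1 *s f2) = 2"
    using pairing by blast
  obtain m where m: "bf w f1 = 2 * m"
    using dperp_even[OF d w(1) f(1)] by (elim evenE)
  have wf2: "bf w f2 = 2 + 2 * k * m"
    using w(2) m by (simp add: bf_linear)
  define u2 where "u2 = w - m *s u"
  define u1 where "u1 = u - k *s u2"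
  have "u1 \<in> dperp d" "u2 \<in> dperp d"
    using u(1) w(1) by (simp_all add: u1_def u2_def dperp_def bf_linear)
  moreover have "dual_pair f1 f2 u1 u2"
    using u k m wf2 by (simp add: dual_pair_def u1_def u2_def bf_linear algebra_simps)
  ultimately show ?thesis
    by blast
qed

locale hyperbolic_frame =
  fixes f1 f2 y1 y2 :: "int^12"
  assumes f_isotropic: "bf f1 f1 = 0" "bf f1 f2 = 0" "bf f2 f2 = 0"
    and y_isotropic: "bf y1 y1 = 0" "bf y1 y2 = 0" "bf y2 y2 = 0"
    and f_y_pairing: "bf f1 y1 = 2" "bf f1 y2 = 0" "bf f2 y1 = 0" "bf f2 y2 = 2"

context
  fixes d f1 f2 :: "int^12"
  assumes root: "bf d d = -2" and f_dperp: "f1 \<in> dperp d" "f2 \<in> dperp d"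
    and f_isotropic: "bf f1 f1 = 0" "bf f1 f2 = 0" "bf f2 f2 = 0"
begin

lemma even_dual_pair_exists:
  assumes u: "u1 \<in> dperp d" "u2 \<in> dperp d" "dual_pair f1 f2 u1 u2"
  shows "\<exists>v1\<in>dperp d. \<exists>v2\<in>dperp d. dual_pair f1 f2 v1 v2 \<and> even (v1$2) \<and> even (v2$2)"
proof -
  \<comment> \<open>z is orthogonal to F with odd coordinate 2; adding it makes coordinate 2 of the u_i even,
    so that by \<open>dperp_norm_mod4\<close> their norms become divisible by 4\<close>
  define w where "w = dperp_dual d 2"
  define z where "z = w - (f1$2) *s u1 - (f2$2) *s u2"
  have w: "w \<in> dperp d" "bf w f1 = 2 * f1$2" "bf w f2 = 2 * f2$2"
    using dperp_dual_mem[OF root] bf_dperp_dual[OF f_dperp(1)] bf_dperp_dual[OF f_dperp(2)]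
    by (simp_all add: w_def bf_sym[of "dperp_dual d 2"])
  have z: "z \<in> dperp d" "bf z f1 = 0" "bf z f2 = 0"
    using w u by (simp_all add: z_def dperp_def dual_pair_def bf_linear)
  have "even (f1$2)" "even (f2$2)"
    using dperp_isotropic_coord_even[OF root] f_dperp f_isotropic by blast+
  then have "odd (z$2)"
    using dperp_dual_coord_odd[OF root] by (simp add: z_def w_def)
  define v1 where "v1 = (if even (u1$2) then u1 else u1 + z)"
  define v2 where "v2 = (if even (u2$2) then u2 else u2 + z)"
  have "v1 \<in> dperp d" "v2 \<in> dperp d"
    using u z by (simp_all add: v1_def v2_def dperp_def bf_linear)
  moreover have "dual_pair f1 f2 v1 v2"
    using u z by (simp add: v1_def v2_def dual_pair_def bf_linear)
  moreover have "even (v1$2)" "even (v2$2)"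
    using \<open>odd (z$2)\<close> by (simp_all add: v1_def v2_def)
  ultimately show ?thesis
    by blast
qed

lemma hyperbolic_frame_of_even_dual_pair:
  assumes v: "v1 \<in> dperp d" "v2 \<in> dperp d" "dual_pair f1 f2 v1 v2" "even (v1$2)" "even (v2$2)"
  shows "\<exists>y1\<in>dperp d. \<exists>y2\<in>dperp d. hyperbolic_frame f1 f2 y1 y2"
proof -
  obtain m1 m2 where m: "bf v1 v1 = 4 * m1" "bf v2 v2 = 4 * m2"
    using dperp_norm_dvd_4[OF root] v by (metis dvdE)
  define y1 where "y1 = v1 - m1 *s f1"
  define y2' where "y2' = v2 - m2 *s f2"
  have y1: "y1 \<in> dperp d" "bf y1 y1 = 0" "bf y1 f1 = 2" "bf y1 f2 = 0"
    using v m f_dperp f_isotropic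
    by (simp_all add: y1_def dperp_def dual_pair_def bf_linear bf_sym[of f1 v1])
  have y2': "y2' \<in> dperp d" "bf y2' y2' = 0" "bf y2' f1 = 0" "bf y2' f2 = 2"
    using v m f_dperp f_isotropic
    by (simp_all add: y2'_def dperp_def dual_pair_def bf_linear bf_sym[of f2 v2] bf_sym[of f2 f1])
  obtain k where k: "bf y1 y2' = 2 * k"
    using dperp_even[OF root y1(1) y2'(1)] by (elim evenE)
  define y2 where "y2 = y2' - k *s f1"
  have "y2 \<in> dperp d"
    using y2'(1) f_dperp by (simp add: y2_def dperp_def bf_linear)
  moreover have "hyperbolic_frame f1 f2 y1 y2"
    using y1 y2' k f_isotropic
    by unfold_locales
      (simp_all add: y2_def bf_linear bf_sym[of f1 y1] bf_sym[of f2 y1] bf_sym[of f1 y2'] bf_sym[of f2 y2']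
        bf_sym[of y2' y1] bf_sym[of f2 f1])
  ultimately show ?thesis
    using y1(1) by blast
qed

end

lemma hyperbolic_frame_exists:
  assumes d: "bf d d = -2" and basis: "lattice_basis F f1 f2" and F: "F \<subseteq> dperp d"
    and "primitive_in (dperp d) F" and "totally_isotropic F"
  shows "\<exists>y1\<in>dperp d. \<exists>y2\<in>dperp d. hyperbolic_frame f1 f2 y1 y2"
proof -
  have f: "f1 \<in> dperp d" "f2 \<in> dperp d" and iso: "bf f1 f1 = 0" "bf f1 f2 = 0" "bf f2 f2 = 0"
    using lattice_basis_vectors_mem[OF basis] F assms(5) unfolding totally_isotropic_def by auto
  obtain u1 u2 where "u1 \<in> dperp d" "u2 \<in> dperp d" "dual_pair f1 f2 u1 u2"
    using dual_pair_exists[OF d basis F assms(4)] by blast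
  then obtain v1 v2 where "v1 \<in> dperp d" "v2 \<in> dperp d" "dual_pair f1 f2 v1 v2" "even (v1$2)" "even (v2$2)"
    using even_dual_pair_exists[OF d f iso] by blast
  then show ?thesis
    by (rule hyperbolic_frame_of_even_dual_pair[OF d f iso])
qed

section \<open>The SL(2) action attached to a hyperbolic frame\<close>

lemma bfC_sym: "bfC z w = bfC w z"
  unfolding bfC_def by (subst sum.swap) (simp add: gram_sym algebra_simps)

lemma bfC_add_left: "bfC (z + z') w = bfC z w + bfC z' w"
  unfolding bfC_def by (simp add: algebra_simps sum.distrib)

lemma bfC_add_right: "bfC w (z + z') = bfC w z + bfC w z'"
  unfolding bfC_def by (simp add: algebra_simps sum.distrib)

lemma bfC_diff_left: "bfC (z - z') w = bfC z w - bfC z' w"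
  unfolding bfC_def by (simp add: algebra_simps sum_subtractf)

lemma bfC_diff_right: "bfC w (z - z') = bfC w z - bfC w z'"
  unfolding bfC_def by (simp add: algebra_simps sum_subtractf)

lemma bfC_scale_left: "bfC (k *s z) w = k * bfC z w"
  unfolding bfC_def by (simp add: sum_distrib_left algebra_simps)

lemma bfC_scale_right: "bfC w (k *s z) = k * bfC w z"
  unfolding bfC_def by (simp add: sum_distrib_left algebra_simps)

lemma bfC_zero_left: "bfC 0 w = 0"
  unfolding bfC_def by simp

lemmas bfC_linear = bfC_add_left bfC_add_right bfC_diff_left bfC_diff_right bfC_scale_left bfC_scale_right

lemma bfC_cvec: "bfC (cvec x) (cvec y) = of_int (bf x y)"
  unfolding bfC_def bf_def cvec_def by simp

lemma bfC_cconj: "bfC (cconj z) (cconj w) = cnj (bfC z w)"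
  unfolding bfC_def cconj_def by simp

lemma cvec_add: "cvec (x + y) = cvec x + cvec y"
  by (simp add: cvec_def vec_eq_iff)

lemma cvec_diff: "cvec (x - y) = cvec x - cvec y"
  by (simp add: cvec_def vec_eq_iff)

lemma cvec_scale: "cvec (k *s x) = of_int k *s cvec x"
  by (simp add: cvec_def vec_eq_iff)

lemma cvec_inject: "cvec x = cvec y \<longleftrightarrow> x = y"
  by (simp add: cvec_def vec_eq_iff)

lemma cconj_cvec: "cconj (cvec x) = cvec x"
  by (simp add: cconj_def cvec_def vec_eq_iff)

lemma cconj_add: "cconj (z + w) = cconj z + cconj w"
  by (simp add: cconj_def vec_eq_iff)

lemma cconj_diff: "cconj (z - w) = cconj z - cconj w"
  by (simp add: cconj_def vec_eq_iff)

lemma cconj_scale: "cconj (k *s z) = cnj k *s cconj z"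
  by (simp add: cconj_def vec_eq_iff)

lemma cvec_mem_complexification: "x \<in> L \<Longrightarrow> cvec x \<in> complexification L"
  unfolding complexification_def by (rule vec.span_base) simp

text \<open>With \<open>h\<close> half the pairing, \<open>h x y1, h x y2\<close> are the coordinates of \<open>x\<close> along \<open>f1, f2\<close>
  and \<open>h x f1, h x f2\<close> those along \<open>y1, y2\<close>. The map acts by the matrix \<open>[[a, b], [c, e]]\<close> on
  the former, by \<open>[[e, -c], [-b, a]]\<close> (the inverse transpose when the determinant is 1) on the
  latter, and fixes the vectors orthogonal to the frame.\<close>

definition frame_action ::
  "('r::comm_ring_1^12 \<Rightarrow> 'r^12 \<Rightarrow> 'r) \<Rightarrow> 'r^12 \<Rightarrow> 'r^12 \<Rightarrow> 'r^12 \<Rightarrow> 'r^12 \<Rightarrow>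
   'r \<Rightarrow> 'r \<Rightarrow> 'r \<Rightarrow> 'r \<Rightarrow> 'r^12 \<Rightarrow> 'r^12" where
  "frame_action h f1 f2 y1 y2 a b c e x =
     x + ((a - 1) * h x y1 + b * h x y2) *s f1 + (c * h x y1 + (e - 1) * h x y2) *s f2
       + ((e - 1) * h x f1 - c * h x f2) *s y1 + ((a - 1) * h x f2 - b * h x f1) *s y2"

lemma frame_action_inverse:
  fixes h :: "'r::comm_ring_1^12 \<Rightarrow> 'r^12 \<Rightarrow> 'r" and f1 f2 y1 y2 x :: "'r^12" and a b c e :: 'r
  defines "x' \<equiv> frame_action h f1 f2 y1 y2 a b c e x"
  assumes "h x' y1 = a * h x y1 + b * h x y2" "h x' y2 = c * h x y1 + e * h x y2"
    and "h x' f1 = e * h x f1 - c * h x f2" "h x' f2 = a * h x f2 - b * h x f1"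
    and "a * e - b * c = 1"
  shows "frame_action h f1 f2 y1 y2 e (-b) (-c) a x' = x"
proof -
  have "frame_action h f1 f2 y1 y2 e (-b) (-c) a x' = x'
     + ((e - 1) * (a * h x y1 + b * h x y2) - b * (c * h x y1 + e * h x y2)) *s f1
     + (- c * (a * h x y1 + b * h x y2) + (a - 1) * (c * h x y1 + e * h x y2)) *s f2
     + ((a - 1) * (e * h x f1 - c * h x f2) + c * (a * h x f2 - b * h x f1)) *s y1
     + ((e - 1) * (a * h x f2 - b * h x f1) + b * (e * h x f1 - c * h x f2)) *s y2"
    unfolding frame_action_def[of h f1 f2 y1 y2 e] assms(2-5) by simp
  also have "\<dots> = x + (a * e - b * c - 1) *s (h x y1 *s f1 + h x y2 *s f2 + h x f1 *s y1 + h x f2 *s y2)"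
    unfolding x'_def frame_action_def by (simp add: vec_eq_iff algebra_simps)
  finally show ?thesis
    using assms(6) by simp
qed

lemma connected_SL2: "connected {(a, b, c, e). (a :: real) * e - b * c = 1}"
proof -
  \<comment> \<open>the first column \<open>(Re z, Im z)\<close> is any nonzero vector; the determinant fixes the second
    column up to adding \<open>t\<close> times the first\<close>
  define p :: "complex \<times> real \<Rightarrow> real \<times> real \<times> real \<times> real" where
    "p q = (let z = fst q; t = snd q; n = (cmod z)\<^sup>2
            in (Re z, t * Re z - Im z / n, Im z, t * Im z + Re z / n))" for q
  have norm: "(cmod z)\<^sup>2 = (Re z)\<^sup>2 + (Im z)\<^sup>2" for z
    by (simp add: cmod_power2)
  have "{(a, b, c, e). (a :: real) * e - b * c = 1} = p ` ((- {0}) \<times> UNIV)"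
  proof (intro equalityI subsetI)
    fix q assume "q \<in> {(a, b, c, e). (a :: real) * e - b * c = 1}"
    then obtain a b c e where q: "q = (a, b, c, e)" and det: "a * e - b * c = 1"
      by auto
    define n where "n = a\<^sup>2 + c\<^sup>2"
    have "n \<noteq> 0"
      using det by (auto simp: n_def power2_eq_square add_nonneg_eq_0_iff)
    have "a * (a * b + c * e) - c = b * n" "c * (a * b + c * e) + a = e * n"
      using det unfolding n_def power2_eq_square by algebra+
    then have "(a * b + c * e) / n * a - c / n = b" "(a * b + c * e) / n * c + a / n = e"
      using \<open>n \<noteq> 0\<close> by (simp_all add: field_simps)
    then have "p (Complex a c, (a * b + c * e) / n) = q"
      by (simp add: p_def Let_def q norm n_def)
    moreover have "Complex a c \<noteq> 0"
      using \<open>n \<noteq> 0\<close> by (auto simp: n_def complex_eq_iff)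
    ultimately show "q \<in> p ` ((- {0}) \<times> UNIV)"
      by force
  next
    fix q assume "q \<in> p ` ((- {0}) \<times> UNIV)"
    then obtain z t where "z \<noteq> 0" and q: "q = p (z, t)"
      by auto
    define n where "n = (cmod z)\<^sup>2"
    have n: "n = Re z * Re z + Im z * Im z" "n \<noteq> 0"
      using \<open>z \<noteq> 0\<close> unfolding n_def cmod_power2 power2_eq_square[symmetric] by (simp_all add: complex_eq_iff)
    have "Re z * (t * Im z + Re z / n) - (t * Re z - Im z / n) * Im z = (Re z * Re z + Im z * Im z) / n"
      using n(2) by (simp add: field_simps)
    also have "\<dots> = 1"
      using n by simp
    finally show "q \<in> {(a, b, c, e). (a :: real) * e - b * c = 1}"
      by (simp add: q p_def Let_def n_def)
  qed
  moreover have "connected ((- {0 :: complex}) \<times> (UNIV :: real set))"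
    by (intro connected_Times connected_punctured_universe connected_UNIV) simp
  moreover have "continuous_on ((- {0}) \<times> UNIV) p"
    unfolding p_def Let_def by (intro continuous_intros) auto
  ultimately show ?thesis
    by (metis connected_continuous_image)
qed

context hyperbolic_frame
begin

definition act_C :: "complex \<Rightarrow> complex \<Rightarrow> complex \<Rightarrow> complex \<Rightarrow> complex^12 \<Rightarrow> complex^12" where
  "act_C = frame_action (\<lambda>z w. bfC z w / 2) (cvec f1) (cvec f2) (cvec y1) (cvec y2)"

definition act_Z :: "int \<Rightarrow> int \<Rightarrow> int \<Rightarrow> int \<Rightarrow> int^12 \<Rightarrow> int^12" where
  "act_Z = frame_action (\<lambda>x y. bf x y div 2) f1 f2 y1 y2"

lemma frame_bfC:
  "bfC (cvec f1) (cvec f1) = 0" "bfC (cvec f1) (cvec f2) = 0" "bfC (cvec f2) (cvec f1) = 0"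
  "bfC (cvec f2) (cvec f2) = 0" "bfC (cvec y1) (cvec y1) = 0" "bfC (cvec y1) (cvec y2) = 0"
  "bfC (cvec y2) (cvec y1) = 0" "bfC (cvec y2) (cvec y2) = 0"
  "bfC (cvec f1) (cvec y1) = 2" "bfC (cvec f1) (cvec y2) = 0" "bfC (cvec f2) (cvec y1) = 0"
  "bfC (cvec f2) (cvec y2) = 2" "bfC (cvec y1) (cvec f1) = 2" "bfC (cvec y2) (cvec f1) = 0"
  "bfC (cvec y1) (cvec f2) = 0" "bfC (cvec y2) (cvec f2) = 2"
  using f_isotropic y_isotropic f_y_pairing
  by (simp_all add: bfC_cvec bf_sym[of f2 f1] bf_sym[of y2 y1] bf_sym[of y1 f1] bf_sym[of y1 f2]
      bf_sym[of y2 f1] bf_sym[of y2 f2])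

lemma act_C_add: "act_C a b c e (z + w) = act_C a b c e z + act_C a b c e w"
  unfolding act_C_def frame_action_def by (simp add: bfC_linear vec_eq_iff algebra_simps add_divide_distrib)

lemma act_C_scale: "act_C a b c e (k *s z) = k *s act_C a b c e z"
  unfolding act_C_def frame_action_def by (simp add: bfC_linear vec_eq_iff algebra_simps)

lemma act_C_id: "act_C 1 0 0 1 z = z"
  unfolding act_C_def frame_action_def by simp

lemma bfC_act_C:
  "bfC (act_C a b c e z) (act_C a b c e w) = bfC z w + (a * e - b * c - 1) *
     (bfC z (cvec y1) * bfC w (cvec f1) + bfC z (cvec y2) * bfC w (cvec f2)
      + bfC z (cvec f1) * bfC w (cvec y1) + bfC z (cvec f2) * bfC w (cvec y2)) / 2"
  unfolding act_C_def frame_action_def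
  by (simp add: bfC_linear frame_bfC bfC_sym[of "cvec _" z] bfC_sym[of "cvec _" w] field_simps)

lemma act_C_isometry: "a * e - b * c = 1 \<Longrightarrow> bfC (act_C a b c e z) (act_C a b c e w) = bfC z w"
  by (simp add: bfC_act_C)

lemma act_C_inverse:
  assumes "a * e - b * c = 1"
  shows "act_C e (-b) (-c) a (act_C a b c e z) = z"
  unfolding act_C_def
  by (rule frame_action_inverse[OF _ _ _ _ assms])
    (simp_all add: frame_action_def bfC_linear frame_bfC bfC_sym[of "cvec _" z] field_simps)

lemma cconj_act_C:
  "cconj (act_C (of_real a) (of_real b) (of_real c) (of_real e) z) =
   act_C (of_real a) (of_real b) (of_real c) (of_real e) (cconj z)"
proof -
  have "bfC (cconj z) (cvec v) = cnj (bfC z (cvec v))" for v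
    using bfC_cconj[of z "cvec v"] by (simp add: cconj_cvec)
  then show ?thesis
    unfolding act_C_def frame_action_def by (simp add: cconj_add cconj_diff cconj_scale cconj_cvec)
qed

lemma act_C_period_cone:
  assumes frame: "{cvec f1, cvec f2, cvec y1, cvec y2} \<subseteq> complexification L"
    and det: "a * e - b * c = 1" and w: "w \<in> period_cone L"
  shows "act_C (of_real a) (of_real b) (of_real c) (of_real e) w \<in> period_cone L"
proof -
  let ?g = "act_C (of_real a) (of_real b) (of_real c) (of_real e)"
  have detC: "of_real a * of_real e - of_real b * of_real c = (1 :: complex)"
    using det by (metis of_real_1 of_real_diff of_real_mult)
  have "w \<in> complexification L" and "bfC w w = 0" and pos: "Re (bfC w (cconj w)) > 0"
    using w by (auto simp: period_cone_def)
  then have "?g w \<in> complexification L"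
    using frame unfolding act_C_def frame_action_def complexification_def
    by (intro vec.span_add vec.span_scale) auto
  moreover have "bfC (?g w) (?g w) = 0"
    using act_C_isometry[OF detC] \<open>bfC w w = 0\<close> by simp
  moreover have "Re (bfC (?g w) (cconj (?g w))) > 0"
    using act_C_isometry[OF detC] pos by (simp add: cconj_act_C)
  moreover from this have "?g w \<noteq> 0"
    by (auto simp: bfC_zero_left)
  ultimately show ?thesis
    by (simp add: period_cone_def)
qed

lemma act_C_connected_component:
  assumes frame: "{cvec f1, cvec f2, cvec y1, cvec y2} \<subseteq> complexification L"
    and det: "a * e - b * c = 1" and w: "w \<in> period_cone L"
  shows "act_C (of_real a) (of_real b) (of_real c) (of_real e) w \<in> connected_component_set (period_cone L) w"
proof -
  define S where "S = {(a, b, c, e). (a :: real) * e - b * c = 1}"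
  define m where "m q = act_C (of_real (fst q)) (of_real (fst (snd q))) (of_real (fst (snd (snd q))))
    (of_real (snd (snd (snd q)))) w" for q
  have cont: "continuous_on S m"
    unfolding m_def act_C_def frame_action_def vector_scalar_mult_def by (intro continuous_intros)
  have "w \<in> m ` S"
    by (rule image_eqI[of _ _ "(1, 0, 0, 1)"]) (simp_all add: S_def m_def act_C_id)
  moreover have "connected (m ` S)"
    using cont connected_SL2 unfolding S_def by (rule connected_continuous_image)
  moreover have "m ` S \<subseteq> period_cone L"
    using act_C_period_cone[OF frame _ w] by (auto simp: S_def m_def)
  ultimately have "m ` S \<subseteq> connected_component_set (period_cone L) w"
    by (rule connected_component_maximal)
  moreover have "m (a, b, c, e) \<in> m ` S"
    using det by (simp add: S_def)
  ultimately show ?thesis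
    by (auto simp: m_def)
qed

lemma cvec_act_Z:
  assumes "even (bf x f1)" "even (bf x f2)" "even (bf x y1)" "even (bf x y2)"
  shows "cvec (act_Z a b c e x) = act_C (of_int a) (of_int b) (of_int c) (of_int e) (cvec x)"
proof -
  have half: "(of_int (bf x v div 2) :: complex) = bfC (cvec x) (cvec v) / 2" if "even (bf x v)" for v
    using that by (auto simp: bfC_cvec elim!: evenE)
  show ?thesis
    unfolding act_Z_def act_C_def frame_action_def
    by (simp add: half assms cvec_add cvec_diff cvec_scale)
qed

lemma act_Z_span: "act_Z a b c e (s *s f1 + t *s f2) = (a * s + b * t) *s f1 + (c * s + e * t) *s f2"
  using f_isotropic f_y_pairing
  by (simp add: act_Z_def frame_action_def bf_linear bf_sym[of f2 f1] vec_eq_iff algebra_simps)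

context
  fixes L :: "(int^12) set"
  assumes L: "sublattice L" and L_even: "\<And>x y. x \<in> L \<Longrightarrow> y \<in> L \<Longrightarrow> even (bf x y)"
    and frame_L: "{f1, f2, y1, y2} \<subseteq> L"
begin

lemma act_Z_mem:
  assumes "x \<in> L"
  shows "act_Z a b c e x \<in> L"
proof -
  have add_scale: "u + k *s v \<in> L" if "u \<in> L" "v \<in> L" for u v k
    using L that unfolding sublattice_def by blast
  show ?thesis
    unfolding act_Z_def frame_action_def using frame_L assms by (intro add_scale) auto
qed

lemma cvec_act_Z_mem:
  "x \<in> L \<Longrightarrow> cvec (act_Z a b c e x) = act_C (of_int a) (of_int b) (of_int c) (of_int e) (cvec x)"
  using frame_L by (intro cvec_act_Z L_even) auto

lemma act_Z_inverse:
  assumes "a * e - b * c = 1" and "x \<in> L"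
  shows "act_Z e (-b) (-c) a (act_Z a b c e x) = x"
proof -
  have "of_int a * of_int e - of_int b * of_int c = (1 :: complex)"
    using assms(1) by (metis of_int_1 of_int_diff of_int_mult)
  then have "cvec (act_Z e (-b) (-c) a (act_Z a b c e x)) = cvec x"
    by (simp add: act_C_inverse cvec_act_Z_mem act_Z_mem assms(2))
  then show ?thesis
    by (simp add: cvec_inject)
qed

lemma act_Z_orth:
  assumes det: "a * e - b * c = 1"
  shows "act_Z a b c e \<in> orth L"
  unfolding orth_def
proof (intro CollectI conjI ballI)
  have "e * a - (- b) * (- c) = 1"
    using det by (simp add: algebra_simps)
  then show "bij_betw (act_Z a b c e) L L"
    using act_Z_inverse[OF det] act_Z_inverse[where a = e and b = "- b" and c = "- c" and e = a]
    by (intro bij_betw_byWitness[where f' = "act_Z e (-b) (-c) a"]) (auto simp: act_Z_mem)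
  show "act_Z a b c e (x + y) = act_Z a b c e x + act_Z a b c e y" if "x \<in> L" "y \<in> L" for x y
    using that L act_C_add unfolding sublattice_def
    by (simp add: cvec_inject[symmetric] cvec_act_Z_mem cvec_add)
  show "bf (act_Z a b c e x) (act_Z a b c e y) = bf x y" if "x \<in> L" "y \<in> L" for x y
  proof -
    have "of_int a * of_int e - of_int b * of_int c = (1 :: complex)"
      using det by (metis of_int_1 of_int_diff of_int_mult)
    then have "(of_int (bf (act_Z a b c e x) (act_Z a b c e y)) :: complex) = of_int (bf x y)"
      unfolding bfC_cvec[symmetric] cvec_act_Z_mem[OF that(1)] cvec_act_Z_mem[OF that(2)]
      by (rule act_C_isometry)
    then show ?thesis
      by simp
  qed
qed

lemma act_Z_orth_plus:
  assumes det: "a * e - b * c = 1"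
  shows "act_Z a b c e \<in> orth_plus L"
proof -
  have "real_of_int a * real_of_int e - real_of_int b * real_of_int c = 1"
    using det by (metis of_int_1 of_int_diff of_int_mult)
  then have "act_C (of_int a) (of_int b) (of_int c) (of_int e) w \<in> connected_component_set (period_cone L) w"
    if "w \<in> period_cone L" for w
    using act_C_connected_component[of L "of_int a" "of_int e" "of_int b" "of_int c" w] frame_L that
    by (auto simp: cvec_mem_complexification)
  then have "\<exists>gC. (\<forall>x\<in>L. gC (cvec x) = cvec (act_Z a b c e x))
      \<and> (\<forall>z\<in>complexification L. \<forall>w\<in>complexification L. gC (z + w) = gC z + gC w)
      \<and> (\<forall>z\<in>complexification L. \<forall>k. gC (k *s z) = k *s gC z)
      \<and> (\<forall>w\<in>period_cone L. gC w \<in> connected_component_set (period_cone L) w)"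
    using cvec_act_Z_mem act_C_add act_C_scale
    by (intro exI[of _ "act_C (of_int a) (of_int b) (of_int c) (of_int e)"]) simp
  then show ?thesis
    using act_Z_orth[OF det] unfolding orth_plus_def by blast
qed

end

end

theorem lemmaA2:
  fixes d :: "int^12" and F :: "(int^12) set" and \<phi> :: "int^12 \<Rightarrow> int^12"
  assumes "bf d d = -2"
    and "F \<subseteq> dperp d"
    and "rank2_sublattice F"
    and "primitive_in (dperp d) F"
    and "totally_isotropic F"
    and "\<phi> \<in> SL_lat F"
  shows "\<exists>g \<in> orth_plus (dperp d). g ` F = F \<and> (\<forall>x\<in>F. g x = \<phi> x)"
proof -
  obtain f1 f2 a b c e where basis: "lattice_basis F f1 f2"
    and \<phi>_basis: "\<phi> f1 = a *s f1 + c *s f2" "\<phi> f2 = b *s f1 + e *s f2" and det: "a * e - b * c = 1"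
    using assms(6) unfolding SL_lat_def by blast
  have \<phi>_bij: "bij_betw \<phi> F F" and \<phi>_add: "\<forall>x\<in>F. \<forall>y\<in>F. \<phi> (x + y) = \<phi> x + \<phi> y"
    using assms(6) by (auto simp: SL_lat_def)
  obtain y1 y2 where y: "y1 \<in> dperp d" "y2 \<in> dperp d" and frame: "hyperbolic_frame f1 f2 y1 y2"
    using hyperbolic_frame_exists[OF assms(1) basis assms(2,4,5)] by blast
  interpret hyperbolic_frame f1 f2 y1 y2
    by (fact frame)
  have "{f1, f2, y1, y2} \<subseteq> dperp d"
    using lattice_basis_vectors_mem[OF basis] assms(2) y by auto
  then have g: "act_Z a b c e \<in> orth_plus (dperp d)"
    using act_Z_orth_plus[OF sublattice_dperp dperp_even[OF assms(1)] _ det] by blast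
  have "act_Z a b c e (s *s f1 + t *s f2) = \<phi> (s *s f1 + t *s f2)" for s t
    by (simp add: act_Z_span additive_lattice_basis_linear[OF basis \<phi>_add] \<phi>_basis vec_eq_iff algebra_simps)
  then have agree: "\<forall>x\<in>F. act_Z a b c e x = \<phi> x"
    using basis unfolding lattice_basis_def by blast
  have "act_Z a b c e ` F = \<phi> ` F"
    using agree by (auto intro: image_cong)
  also have "\<dots> = F"
    using \<phi>_bij by (simp add: bij_betw_def)
  finally show ?thesis
    using g agree by blast
qed

end
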